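(* Let $P$ be an irreducible transition matrix on a finite set $G$ with $|G|\ge2$, reversible with respect to the probability measure $\pi$. Then for every $S\subset G$ and every $x\in S$, $$h_S(x)\le u(P)^{-1}\,\pi(x)\,\mathbb E_x[T_S^+].$$
   Context: $(X_t)$ is the chain with transition matrix $P$. For $A\subset G$, $T_A=\inf\{t\ge0:X_t\in A\}$ and $T_A^+=\inf\{t\ge1:X_t\in A\}$. $\Pr_z,\mathbb E_z$ refer to the chain started at $z$. $u(P):=\min_{x\neq y}\Pr_x[T_y<T_x^+]$. The harmonic measure on $S$ from $y$ is $h_{y,S}(x)=\Pr_y[X_{T_S}=x]$, and the harmonic measure from stationarity is $h_S(x)=\sum_{y\in G}\pi(y)h_{y,S}(x)$. *)

theory Defs
  imports Complex_Main
begin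

text \<open>Markov chain on a finite type 'a (the state space G = UNIV), transition matrix
  P :: 'a => 'a => real. All path-probability quantities are computed by summing over
  the first step / the time index, i.e. from the law of the chain on finite paths.\<close>

definition stochastic :: "('a::finite \<Rightarrow> 'a \<Rightarrow> real) \<Rightarrow> bool" where
  "stochastic P \<longleftrightarrow> (\<forall>x y. P x y \<ge> 0) \<and> (\<forall>x. (\<Sum>y\<in>UNIV. P x y) = 1)"

definition irreducible :: "('a::finite \<Rightarrow> 'a \<Rightarrow> real) \<Rightarrow> bool" where
  "irreducible P \<longleftrightarrow> (\<forall>x y. (x, y) \<in> {(a, b). P a b > 0}\<^sup>*)"

definition prob_vec :: "('a::finite \<Rightarrow> real) \<Rightarrow> bool" where
  "prob_vec \<mu> \<longleftrightarrow> (\<forall>x. \<mu> x \<ge> 0) \<and> (\<Sum>x\<in>UNIV. \<mu> x) = 1"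

definition reversible :: "('a::finite \<Rightarrow> 'a \<Rightarrow> real) \<Rightarrow> ('a \<Rightarrow> real) \<Rightarrow> bool" where
  "reversible P \<mu> \<longleftrightarrow> (\<forall>x y. \<mu> x * P x y = \<mu> y * P y x)"

text \<open>hit_at P A n z x = Pr_z[T_A = n, X_{T_A} = x], where T_A = inf{t >= 0. X_t \<in> A}.\<close>
fun hit_at :: "('a::finite \<Rightarrow> 'a \<Rightarrow> real) \<Rightarrow> 'a set \<Rightarrow> nat \<Rightarrow> 'a \<Rightarrow> 'a \<Rightarrow> real" where
  "hit_at P A 0 z x = (if z \<in> A \<and> z = x then 1 else 0)"
| "hit_at P A (Suc n) z x = (if z \<in> A then 0 else (\<Sum>w\<in>UNIV. P z w * hit_at P A n w x))"

text \<open>hitp_at P A n z x = Pr_z[T_A^+ = n, X_{T_A^+} = x], where T_A^+ = inf{t >= 1. X_t \<in> A}.\<close>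
fun hitp_at :: "('a::finite \<Rightarrow> 'a \<Rightarrow> real) \<Rightarrow> 'a set \<Rightarrow> nat \<Rightarrow> 'a \<Rightarrow> 'a \<Rightarrow> real" where
  "hitp_at P A 0 z x = 0"
| "hitp_at P A (Suc n) z x = (\<Sum>w\<in>UNIV. P z w * hit_at P A n w x)"

definition harm :: "('a::finite \<Rightarrow> 'a \<Rightarrow> real) \<Rightarrow> 'a \<Rightarrow> 'a set \<Rightarrow> 'a \<Rightarrow> real" where
  "harm P y S x = (\<Sum>n. hit_at P S n y x)"

definition harm_stat :: "('a::finite \<Rightarrow> 'a \<Rightarrow> real) \<Rightarrow> ('a \<Rightarrow> real) \<Rightarrow> 'a set \<Rightarrow> 'a \<Rightarrow> real" where
  "harm_stat P \<mu> S x = (\<Sum>y\<in>UNIV. \<mu> y * harm P y S x)"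

text \<open>Pr_x[T_y < T_x^+] for x \<noteq> y: the first visit at times >= 1 to {x,y} is at y.\<close>
definition escape :: "('a::finite \<Rightarrow> 'a \<Rightarrow> real) \<Rightarrow> 'a \<Rightarrow> 'a \<Rightarrow> real" where
  "escape P x y = (\<Sum>n. hitp_at P {x, y} n x y)"

definition u_P :: "('a::finite \<Rightarrow> 'a \<Rightarrow> real) \<Rightarrow> real" where
  "u_P P = Min {escape P x y | x y. x \<noteq> y}"

text \<open>E_z[T_A^+] = sum_n n Pr_z[T_A^+ = n] (the chain is irreducible on a finite space in the
  theorem, so T_A^+ is a.s. finite with finite mean for nonempty A).\<close>
definition exp_return :: "('a::finite \<Rightarrow> 'a \<Rightarrow> real) \<Rightarrow> 'a set \<Rightarrow> 'a \<Rightarrow> real" where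
  "exp_return P A z = (\<Sum>n. real n * (\<Sum>x\<in>UNIV. hitp_at P A n z x))"

end

theory Submission
  imports Defs
begin

text \<open>By reversibility, a path from y that stays outside S and first enters S at x has the same
  \<pi>-weight as the reversed path from x that avoids S after time 0. Summing over y and over the
  length n gives h_S(x) = \<pi>(x) \<Sum>n. Pr_x[T_S^+ > n] = \<pi>(x) E_x[T_S^+]. Irreducibility makes
  0 < u(P) \<le> 1, so the factor u(P)^-1 only weakens this identity.\<close>

fun matpow :: "('a::finite \<Rightarrow> 'a \<Rightarrow> real) \<Rightarrow> nat \<Rightarrow> 'a \<Rightarrow> 'a \<Rightarrow> real" where
  "matpow M 0 a b = (if a = b then 1 else 0)"
| "matpow M (Suc n) a b = (\<Sum>w\<in>UNIV. M a w * matpow M n w b)"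

lemma matpow_add: "matpow M (n + m) a b = (\<Sum>u\<in>UNIV. matpow M n a u * matpow M m u b)"
proof (induction n arbitrary: a)
  case 0
  have "(\<Sum>u\<in>UNIV. matpow M 0 a u * matpow M m u b) = (\<Sum>u\<in>UNIV. if a = u then matpow M m u b else 0)"
    by (rule sum.cong) auto
  then show ?case by simp
next
  case (Suc n)
  have "matpow M (Suc n + m) a b = (\<Sum>w\<in>UNIV. \<Sum>u\<in>UNIV. M a w * matpow M n w u * matpow M m u b)"
    by (simp add: Suc sum_distrib_left mult.assoc)
  also have "\<dots> = (\<Sum>u\<in>UNIV. matpow M (Suc n) a u * matpow M m u b)"
    by (subst sum.swap) (simp add: sum_distrib_right)
  finally show ?case .
qed

lemma matpow_Suc_right: "matpow M (Suc n) a b = (\<Sum>w\<in>UNIV. matpow M n a w * M w b)"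
  using matpow_add[of M n 1 a b] by (simp add: if_distrib sum.delta' cong: if_cong)

lemma matpow_nonneg: "(\<And>a b. M a b \<ge> 0) \<Longrightarrow> matpow M n a b \<ge> 0"
  by (induction n arbitrary: a) (auto intro!: sum_nonneg)

lemma matpow_pos_of_rtrancl:
  assumes "\<And>a b. M a b \<ge> 0" "(a, b) \<in> {(c, d). M c d > 0}\<^sup>*"
  shows "\<exists>n. matpow M n a b > 0"
  using assms(2)
proof (induction rule: converse_rtrancl_induct)
  case base
  show ?case by (rule exI[of _ 0]) simp
next
  case (step a w)
  then obtain n where "matpow M n w b > 0" by blast
  moreover have "M a w * matpow M n w b \<le> matpow M (Suc n) a b"
    by (simp only: matpow.simps)
       (rule member_le_sum, auto intro: mult_nonneg_nonneg matpow_nonneg assms(1))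
  ultimately show ?case using step.hyps(1)
    by (intro exI[of _ "Suc n"]) (auto intro: order_less_le_trans[OF mult_pos_pos])
qed

lemma rtrancl_first_entry:
  assumes "(v, s) \<in> R\<^sup>*" "s \<in> S"
  shows "\<exists>z\<in>S. (v, z) \<in> {(c, d) \<in> R. c \<notin> S}\<^sup>*"
  using assms
proof (induction rule: converse_rtrancl_induct)
  case (step w v)
  then obtain z where "z \<in> S" "(v, z) \<in> {(c, d) \<in> R. c \<notin> S}\<^sup>*" by blast
  with step.hyps(1) show ?case
    by (cases "w \<in> S") (auto intro: converse_rtrancl_into_rtrancl)
qed auto

lemma rtrancl_last_exit:
  assumes "(a, b) \<in> R\<^sup>*" "a \<noteq> b"
  shows "\<exists>v. (a, v) \<in> R \<and> (v, b) \<in> {(c, d) \<in> R. c \<notin> {a, b}}\<^sup>*"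
proof -
  let ?R' = "{(c, d) \<in> R. c \<notin> {a, b}}"
  have "((w, b) \<in> ?R'\<^sup>* \<and> w \<noteq> a) \<or> (\<exists>v. (a, v) \<in> R \<and> (v, b) \<in> ?R'\<^sup>*)"
    if "(w, b) \<in> R\<^sup>*" for w
    using that
  proof (induction rule: converse_rtrancl_induct)
    case base
    show ?case using assms(2) by simp
  next
    case (step w v)
    then consider "(v, b) \<in> ?R'\<^sup>*" "v \<noteq> a" | "\<exists>v. (a, v) \<in> R \<and> (v, b) \<in> ?R'\<^sup>*" by blast
    then show ?case
    proof cases
      case 1
      with step.hyps(1) show ?thesis
        by (cases "w = a"; cases "w = b") (auto intro: converse_rtrancl_into_rtrancl)
    qed blast
  qed
  from this[OF assms(1)] show ?thesis by blast
qed

definition kill_from :: "('a \<Rightarrow> 'a \<Rightarrow> real) \<Rightarrow> 'a set \<Rightarrow> 'a \<Rightarrow> 'a \<Rightarrow> real" where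
  "kill_from P S a b = (if a \<in> S then 0 else P a b)"

definition kill_into :: "('a \<Rightarrow> 'a \<Rightarrow> real) \<Rightarrow> 'a set \<Rightarrow> 'a \<Rightarrow> 'a \<Rightarrow> real" where
  "kill_into P S a b = (if b \<in> S then 0 else P a b)"

text \<open>\<open>survival P S n a\<close> is Pr_a[T_S^+ > n] and \<open>return_prob P S n a\<close> is Pr_a[T_S^+ = n].\<close>

definition survival :: "('a::finite \<Rightarrow> 'a \<Rightarrow> real) \<Rightarrow> 'a set \<Rightarrow> nat \<Rightarrow> 'a \<Rightarrow> real" where
  "survival P S n a = (\<Sum>y\<in>UNIV. matpow (kill_into P S) n a y)"

definition return_prob :: "('a::finite \<Rightarrow> 'a \<Rightarrow> real) \<Rightarrow> 'a set \<Rightarrow> nat \<Rightarrow> 'a \<Rightarrow> real" where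
  "return_prob P S n a = (\<Sum>z\<in>UNIV. hitp_at P S n a z)"

lemma kill_nonneg:
  assumes "stochastic P"
  shows "kill_from P S a b \<ge> 0" "kill_into P S a b \<ge> 0"
  using assms by (auto simp: kill_from_def kill_into_def stochastic_def)

lemma hit_at_eq_matpow: "hit_at P S n y z = (if z \<in> S then matpow (kill_from P S) n y z else 0)"
  by (induction n arbitrary: y) (auto simp: kill_from_def sum_distrib_left intro!: sum.cong)

lemma hit_at_nonneg: "stochastic P \<Longrightarrow> hit_at P S n y z \<ge> 0"
  by (simp add: hit_at_eq_matpow matpow_nonneg kill_nonneg)

lemma hitp_at_nonneg: "stochastic P \<Longrightarrow> hitp_at P S n y z \<ge> 0"
  by (cases n) (auto intro!: sum_nonneg mult_nonneg_nonneg hit_at_nonneg simp: stochastic_def)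

lemma first_step_kill_from_eq_last_step_kill_into:
  "(\<Sum>w\<in>UNIV. P a w * matpow (kill_from P S) n w z) = (\<Sum>u\<in>UNIV. matpow (kill_into P S) n a u * P u z)"
proof (induction n arbitrary: a)
  case 0
  have "(\<Sum>u\<in>UNIV. matpow (kill_into P S) 0 a u * P u z) = (\<Sum>u\<in>UNIV. if a = u then P u z else 0)"
    by (rule sum.cong) auto
  then show ?case by (simp add: if_distrib[of "\<lambda>c. P a _ * c"] sum.delta' cong: if_cong)
next
  case (Suc n)
  have "(\<Sum>w\<in>UNIV. P a w * matpow (kill_from P S) (Suc n) w z)
      = (\<Sum>v\<in>UNIV. \<Sum>w\<in>UNIV. P a w * kill_from P S w v * matpow (kill_from P S) n v z)"
    by (subst sum.swap) (simp add: sum_distrib_left mult.assoc)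
  also have "\<dots> = (\<Sum>v\<in>UNIV. \<Sum>w\<in>UNIV. kill_into P S a w * P w v * matpow (kill_from P S) n v z)"
    by (intro sum.cong) (auto simp: kill_from_def kill_into_def)
  also have "\<dots> = (\<Sum>w\<in>UNIV. kill_into P S a w * (\<Sum>u\<in>UNIV. matpow (kill_into P S) n w u * P u z))"
    by (subst sum.swap) (simp add: Suc[symmetric] sum_distrib_left mult.assoc)
  also have "\<dots> = (\<Sum>u\<in>UNIV. matpow (kill_into P S) (Suc n) a u * P u z)"
    by (simp add: sum_distrib_left sum_distrib_right mult.assoc) (rule sum.swap)
  finally show ?case .
qed

lemma hitp_at_Suc_last_step:
  "hitp_at P S (Suc n) a z = (if z \<in> S then (\<Sum>u\<in>UNIV. matpow (kill_into P S) n a u * P u z) else 0)"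
  by (simp add: hit_at_eq_matpow first_step_kill_from_eq_last_step_kill_into[symmetric] cong: if_cong)

lemma return_prob_Suc:
  assumes "stochastic P"
  shows "return_prob P S (Suc n) a = survival P S n a - survival P S (Suc n) a"
proof -
  have split: "(\<Sum>z\<in>S. P u z) + (\<Sum>y\<in>UNIV. kill_into P S u y) = 1" for u
  proof -
    have "(\<Sum>y\<in>UNIV. kill_into P S u y) = (\<Sum>y\<in>UNIV - S. P u y)"
      by (simp add: kill_into_def sum.If_cases Compl_eq_Diff_UNIV)
    then show ?thesis
      using assms sum.subset_diff[of S UNIV "P u"] by (simp add: stochastic_def)
  qed
  have "return_prob P S (Suc n) a = (\<Sum>u\<in>UNIV. matpow (kill_into P S) n a u * (\<Sum>z\<in>S. P u z))"
    unfolding return_prob_def hitp_at_Suc_last_step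
    by (simp add: sum.If_cases sum_distrib_left) (rule sum.swap)
  moreover have "survival P S (Suc n) a
      = (\<Sum>u\<in>UNIV. matpow (kill_into P S) n a u * (\<Sum>y\<in>UNIV. kill_into P S u y))"
    unfolding survival_def matpow_Suc_right by (simp add: sum_distrib_left) (rule sum.swap)
  ultimately have "return_prob P S (Suc n) a + survival P S (Suc n) a = survival P S n a"
    by (simp add: survival_def split sum.distrib[symmetric] distrib_left[symmetric])
  then show ?thesis by simp
qed

lemma return_prob_nonneg: "stochastic P \<Longrightarrow> return_prob P S n a \<ge> 0"
  unfolding return_prob_def by (auto intro!: sum_nonneg hitp_at_nonneg)

lemma survival_0 [simp]: "survival P S 0 a = 1"
  by (simp add: survival_def)

lemma survival_nonneg: "stochastic P \<Longrightarrow> survival P S n a \<ge> 0"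
  unfolding survival_def by (auto intro!: sum_nonneg matpow_nonneg kill_nonneg)

lemma decseq_survival: "stochastic P \<Longrightarrow> decseq (\<lambda>n. survival P S n a)"
  using return_prob_Suc[of P S _ a] return_prob_nonneg[of P S _ a]
  by (intro decseq_SucI) (metis diff_ge_0_iff_ge)

lemma survival_le_1: "stochastic P \<Longrightarrow> survival P S n a \<le> 1"
  using decseqD[OF decseq_survival, of P 0 n] by simp

lemma sum_return_prob: "stochastic P \<Longrightarrow> (\<Sum>n<Suc K. return_prob P S n a) = 1 - survival P S K a"
  by (induction K) (simp_all add: return_prob_Suc, simp add: return_prob_def)

lemma stochastic_obtain_successor:
  assumes "stochastic P"
  obtains v where "P a v > 0"
proof -
  have "\<not> (\<forall>v. P a v \<le> 0)"
    using assms sum_nonpos[of UNIV "P a"] by (auto simp: stochastic_def)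
  with that show thesis by (auto simp: not_le)
qed

lemma hitp_at_pos:
  assumes "stochastic P" "P a v > 0" "z \<in> S"
    and "(v, z) \<in> {(c, d) \<in> {(c, d). P c d > 0}. c \<notin> S}\<^sup>*"
  shows "\<exists>n. hitp_at P S (Suc n) a z > 0"
proof -
  have "{(c, d) \<in> {(c, d). P c d > 0}. c \<notin> S} = {(c, d). kill_from P S c d > 0}"
    by (auto simp: kill_from_def)
  with assms(4) obtain n where n: "matpow (kill_from P S) n v z > 0"
    using matpow_pos_of_rtrancl[of "kill_from P S"] kill_nonneg[OF assms(1)] by metis
  have "P a v * hit_at P S n v z \<le> hitp_at P S (Suc n) a z"
    using assms(1) unfolding hitp_at.simps
    by (intro member_le_sum mult_nonneg_nonneg hit_at_nonneg) (auto simp: stochastic_def)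
  moreover have "P a v * hit_at P S n v z > 0"
    using assms(2,3) n by (simp add: hit_at_eq_matpow)
  ultimately show ?thesis by (auto intro: order_less_le_trans)
qed

lemma survival_eventually_lt_1:
  assumes "stochastic P" "irreducible P" "s \<in> S"
  shows "\<exists>k. survival P S k a < 1"
proof -
  obtain v where v: "P a v > 0" using stochastic_obtain_successor[OF assms(1)] .
  have "(v, s) \<in> {(c, d). P c d > 0}\<^sup>*" using assms(2) by (simp add: irreducible_def)
  then obtain z where "z \<in> S" "(v, z) \<in> {(c, d) \<in> {(c, d). P c d > 0}. c \<notin> S}\<^sup>*"
    using rtrancl_first_entry[OF _ assms(3)] by blast
  then obtain n where n: "hitp_at P S (Suc n) a z > 0"
    using hitp_at_pos[OF assms(1) v] by blast
  have "hitp_at P S (Suc n) a z \<le> return_prob P S (Suc n) a"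
    unfolding return_prob_def
    by (rule member_le_sum) (simp_all add: hitp_at_nonneg[OF assms(1)] del: hitp_at.simps)
  then have "survival P S (Suc n) a < survival P S n a"
    using n return_prob_Suc[OF assms(1), of S n a] by linarith
  then show ?thesis using survival_le_1[OF assms(1), of S n a] by (intro exI[of _ "Suc n"]) linarith
qed

lemma escape_summable_le_1:
  assumes "stochastic P"
  shows "summable (\<lambda>n. hitp_at P {a, b} n a b)" "escape P a b \<le> 1"
proof -
  have partial: "(\<Sum>n<K. hitp_at P {a, b} n a b) \<le> 1" for K
  proof (cases K)
    case (Suc K')
    have "(\<Sum>n<K. hitp_at P {a, b} n a b) \<le> (\<Sum>n<K. return_prob P {a, b} n a)"
      unfolding return_prob_def
      by (intro sum_mono member_le_sum) (simp_all add: hitp_at_nonneg[OF assms] del: hitp_at.simps)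
    also have "\<dots> \<le> 1"
      using Suc sum_return_prob[OF assms] survival_nonneg[OF assms] by simp
    finally show ?thesis .
  qed simp
  show summable: "summable (\<lambda>n. hitp_at P {a, b} n a b)"
    using partial by (intro summableI_nonneg_bounded hitp_at_nonneg assms)
  show "escape P a b \<le> 1"
    unfolding escape_def by (rule suminf_le_const[OF summable partial])
qed

lemma escape_pos:
  assumes "stochastic P" "irreducible P" "a \<noteq> b"
  shows "escape P a b > 0"
proof -
  have "(a, b) \<in> {(c, d). P c d > 0}\<^sup>*" using assms(2) by (simp add: irreducible_def)
  then obtain v where "P a v > 0" "(v, b) \<in> {(c, d) \<in> {(c, d). P c d > 0}. c \<notin> {a, b}}\<^sup>*"
    using rtrancl_last_exit[OF _ assms(3)] by blast
  then obtain n where "hitp_at P {a, b} (Suc n) a b > 0"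
    using hitp_at_pos[OF assms(1)] by blast
  then show ?thesis
    unfolding escape_def
    by (rule suminf_pos2[OF escape_summable_le_1(1)[OF assms(1)] hitp_at_nonneg[OF assms(1)]])
qed

lemma u_P_pos_le_1:
  fixes P :: "'a::finite \<Rightarrow> 'a \<Rightarrow> real"
  assumes "stochastic P" "irreducible P" "card (UNIV :: 'a set) \<ge> 2"
  shows "0 < u_P P" "u_P P \<le> 1"
proof -
  let ?E = "{escape P x y | x y. x \<noteq> y}"
  have "finite ?E"
    by (rule finite_subset[of _ "(\<lambda>(x, y). escape P x y) ` UNIV"]) auto
  obtain a b :: 'a where "a \<noteq> b"
    using assms(3) card_le_Suc0_iff_eq[of "UNIV :: 'a set"] by auto
  then have "escape P a b \<in> ?E" by blast
  show "0 < u_P P"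
    unfolding u_P_def using \<open>finite ?E\<close> \<open>escape P a b \<in> ?E\<close> escape_pos[OF assms(1,2)]
    by (subst Min_gr_iff) auto
  have "u_P P \<le> escape P a b"
    unfolding u_P_def using \<open>finite ?E\<close> \<open>escape P a b \<in> ?E\<close> by (rule Min_le)
  then show "u_P P \<le> 1" using escape_summable_le_1(2)[OF assms(1), of a b] by simp
qed

lemma survival_add: "survival P S (n + m) a = (\<Sum>u\<in>UNIV. matpow (kill_into P S) n a u * survival P S m u)"
  unfolding survival_def matpow_add by (subst sum.swap) (simp add: sum_distrib_left)

lemma survival_contraction:
  assumes "stochastic P" "irreducible P" "s \<in> S"
  shows "\<exists>m c. 0 < m \<and> 0 < c \<and> c < 1 \<and> (\<forall>u::'a::finite. survival P S m u \<le> c)"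
proof -
  obtain k where k: "\<And>u. survival P S (k u) u < 1"
    using survival_eventually_lt_1[OF assms] by metis
  define m where "m = Suc (Max (range k))"
  define c where "c = max (1/2) (Max (range (survival P S m)))"
  have "survival P S m u < 1" for u
  proof -
    have "k u \<le> m" by (simp add: m_def le_SucI)
    then show ?thesis using decseqD[OF decseq_survival[OF assms(1)]] k[of u] order_le_less_trans by blast
  qed
  then have "c < 1" by (simp add: c_def)
  moreover have "survival P S m u \<le> c" for u
    unfolding c_def by (rule max.coboundedI2) simp
  ultimately show ?thesis by (intro exI[of _ m] exI[of _ c]) (simp add: m_def c_def)
qed

lemma survival_mult_le_power:
  assumes "stochastic P" "\<And>u. survival P S m u \<le> c"
  shows "survival P S (k * m) a \<le> c ^ k"
proof (induction k arbitrary: a)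
  case (Suc k)
  have "0 \<le> c" using assms survival_nonneg order_trans by blast
  have "survival P S (Suc k * m) a = (\<Sum>u\<in>UNIV. matpow (kill_into P S) (k * m) a u * survival P S m u)"
    by (simp add: survival_add[symmetric] add.commute)
  also have "\<dots> \<le> (\<Sum>u\<in>UNIV. matpow (kill_into P S) (k * m) a u * c)"
    by (intro sum_mono mult_left_mono assms(2) matpow_nonneg kill_nonneg assms(1))
  also have "\<dots> = c * survival P S (k * m) a" by (simp add: survival_def sum_distrib_left mult.commute)
  also have "\<dots> \<le> c * c ^ k" using Suc \<open>0 \<le> c\<close> by (simp add: mult_left_mono)
  finally show ?case by simp
qed simp

lemma survival_geometric:
  assumes "stochastic P" "irreducible P" "s \<in> S"
  shows "\<exists>\<rho> C. 0 < \<rho> \<and> \<rho> < 1 \<and> (\<forall>n (a::'a::finite). survival P S n a \<le> C * \<rho> ^ n)"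
proof -
  obtain m c where mc: "0 < m" "0 < c" "c < 1" "\<And>u::'a. survival P S m u \<le> c"
    using survival_contraction[OF assms] by blast
  define \<rho> where "\<rho> = root m c"
  have \<rho>: "0 < \<rho>" "\<rho> < 1" "\<rho> ^ m = c" using mc by (simp_all add: \<rho>_def)
  have "survival P S n a \<le> (1 / c) * \<rho> ^ n" for n a
  proof -
    have "n \<le> (n div m) * m + m"
      using mc(1) by (metis add_le_mono div_mult_mod_eq mod_less_divisor order_less_imp_le order_refl)
    then have "\<rho> ^ ((n div m) * m + m) \<le> \<rho> ^ n"
      using \<rho> by (intro power_decreasing) auto
    have "survival P S n a \<le> survival P S ((n div m) * m) a"
      by (rule decseqD[OF decseq_survival[OF assms(1)]]) simp
    also have "\<dots> \<le> c ^ (n div m)" by (rule survival_mult_le_power[OF assms(1) mc(4)])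
    also have "\<dots> = \<rho> ^ ((n div m) * m + m) / c"
      using mc(2) by (simp add: power_add power_mult mult.commute[of _ m] \<rho>(3))
    also have "\<dots> \<le> \<rho> ^ n / c"
      using \<open>\<rho> ^ ((n div m) * m + m) \<le> \<rho> ^ n\<close> mc(2) by (simp add: divide_right_mono)
    finally show ?thesis by simp
  qed
  with \<rho> show ?thesis by blast
qed

lemma sums_tail_formula:
  fixes t :: "nat \<Rightarrow> real"
  assumes "summable t" "(\<lambda>n. real n * t n) \<longlonglongrightarrow> 0"
  shows "(\<lambda>n. real (Suc n) * (t n - t (Suc n))) sums suminf t"
proof -
  have "(\<Sum>n<N. real (Suc n) * (t n - t (Suc n))) = (\<Sum>n<N. t n) - real N * t N" for N
    by (induction N) (simp_all add: algebra_simps)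
  moreover have "(\<lambda>N. (\<Sum>n<N. t n) - real N * t N) \<longlonglongrightarrow> suminf t - 0"
    by (intro tendsto_diff summable_LIMSEQ assms)
  ultimately show ?thesis unfolding sums_def by simp
qed

lemma survival_sums_exp_return:
  assumes "stochastic P" "irreducible P" "s \<in> S"
  shows "(\<lambda>n. survival P S n a) sums exp_return P S a"
proof -
  let ?t = "\<lambda>n. survival P S n a"
  obtain \<rho> C where \<rho>: "0 < \<rho>" "\<rho> < 1" and bound: "\<And>n. ?t n \<le> C * \<rho> ^ n"
    using survival_geometric[OF assms] by blast
  have "summable ?t"
    using \<rho> bound survival_nonneg[OF assms(1)]
    by (intro summable_comparison_test[OF _ summable_mult[OF summable_geometric]]) auto
  have "(\<lambda>n. real n * ?t n) \<longlonglongrightarrow> 0"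
  proof (rule tendsto_sandwich[where f="\<lambda>_. 0" and h="\<lambda>n. C * (real n * \<rho> ^ n)"])
    show "\<forall>\<^sub>F n in sequentially. 0 \<le> real n * ?t n"
      using survival_nonneg[OF assms(1)] by simp
    show "\<forall>\<^sub>F n in sequentially. real n * ?t n \<le> C * (real n * \<rho> ^ n)"
      using mult_left_mono[OF bound, of "real _"] by (intro always_eventually allI) (simp add: mult_ac)
    show "(\<lambda>n. C * (real n * \<rho> ^ n)) \<longlonglongrightarrow> 0"
      using tendsto_mult_right_zero[OF powser_times_n_limit_0[of \<rho>]] \<rho> by simp
  qed simp
  from sums_tail_formula[OF \<open>summable ?t\<close> this]
  have "(\<lambda>n. real n * return_prob P S n a) sums suminf ?t"
    using sums_Suc_iff[of "\<lambda>n. real n * return_prob P S n a"] by (simp add: return_prob_Suc[OF assms(1)])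
  moreover have "exp_return P S a = (\<Sum>n. real n * return_prob P S n a)"
    by (simp add: exp_return_def return_prob_def)
  ultimately show ?thesis
    using \<open>summable ?t\<close> by (simp add: sums_iff)
qed

lemma reversible_matpow_kill:
  assumes "reversible P \<pi>"
  shows "\<pi> y * matpow (kill_from P S) n y x = \<pi> x * matpow (kill_into P S) n x y"
proof (induction n arbitrary: y)
  case (Suc n)
  have step: "\<pi> y * kill_from P S y w = \<pi> w * kill_into P S w y" for w
    using assms by (simp add: reversible_def kill_from_def kill_into_def)
  have "\<pi> y * matpow (kill_from P S) (Suc n) y x
      = (\<Sum>w\<in>UNIV. kill_into P S w y * (\<pi> w * matpow (kill_from P S) n w x))"
    by (simp add: sum_distrib_left step mult.assoc[symmetric]) (simp add: mult_ac)
  also have "\<dots> = \<pi> x * matpow (kill_into P S) (Suc n) x y"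
    unfolding Suc matpow_Suc_right by (simp add: sum_distrib_left mult_ac)
  finally show ?case .
qed simp

lemma suminf_scaled:
  fixes c :: real
  assumes "\<And>n. c * f n = g n" "summable g"
  shows "c * suminf f = suminf g"
proof (cases "c = 0")
  case False
  then have "f = (\<lambda>n. g n / c)" using assms(1) by (auto simp: field_simps)
  then show ?thesis using False assms by (simp add: suminf_divide summable_divide)
next
  case True
  then have "g = (\<lambda>_. 0)" using assms(1) by auto
  with True show ?thesis by simp
qed

lemma harm_stat_eq_exp_return:
  assumes "stochastic P" "irreducible P" "reversible P \<pi>" "x \<in> S"
  shows "harm_stat P \<pi> S x = \<pi> x * exp_return P S x"
proof -
  have survival: "(\<lambda>n. survival P S n x) sums exp_return P S x"
    by (rule survival_sums_exp_return[OF assms(1,2,4)])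
  have "norm (matpow (kill_into P S) n x y) \<le> survival P S n x" for n y
  proof -
    have "\<And>z. matpow (kill_into P S) n x z \<ge> 0" by (intro matpow_nonneg kill_nonneg assms(1))
    then show ?thesis unfolding survival_def by (simp add: member_le_sum)
  qed
  then have summable: "summable (\<lambda>n. matpow (kill_into P S) n x y)" for y
    using summable_comparison_test' sums_summable[OF survival] by metis
  then have "\<pi> y * harm P y S x = (\<Sum>n. \<pi> x * matpow (kill_into P S) n x y)" for y
    unfolding harm_def using assms(4)
    by (intro suminf_scaled summable_mult summable) (simp_all add: hit_at_eq_matpow reversible_matpow_kill[OF assms(3)])
  then have "harm_stat P \<pi> S x = (\<Sum>y\<in>UNIV. \<Sum>n. \<pi> x * matpow (kill_into P S) n x y)"
    by (simp add: harm_stat_def)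
  also have "\<dots> = (\<Sum>n. \<Sum>y\<in>UNIV. \<pi> x * matpow (kill_into P S) n x y)"
    by (rule suminf_sum[symmetric]) (intro summable_mult summable)
  also have "\<dots> = (\<Sum>n. \<pi> x * survival P S n x)"
    by (simp add: survival_def sum_distrib_left)
  also have "\<dots> = \<pi> x * exp_return P S x"
    using survival by (simp add: suminf_mult sums_iff)
  finally show ?thesis .
qed

theorem mainTheorem4:
  fixes P :: "'a::finite \<Rightarrow> 'a \<Rightarrow> real" and \<pi> :: "'a \<Rightarrow> real"
    and S :: "'a set" and x :: 'a
  assumes "card (UNIV :: 'a set) \<ge> 2"
    and "stochastic P"
    and "irreducible P"
    and "prob_vec \<pi>"
    and "reversible P \<pi>"
    and "x \<in> S"
  shows "harm_stat P \<pi> S x \<le> inverse (u_P P) * \<pi> x * exp_return P S x"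
proof -
  have "1 \<le> inverse (u_P P)"
    using u_P_pos_le_1[OF assms(2,3,1)] by (simp add: one_le_inverse)
  moreover have "0 \<le> exp_return P S x"
    using survival_sums_exp_return[OF assms(2,3,6)] survival_nonneg[OF assms(2)]
    by (metis sums_iff suminf_nonneg)
  then have "0 \<le> \<pi> x * exp_return P S x"
    using assms(4) by (simp add: prob_vec_def)
  ultimately have "\<pi> x * exp_return P S x \<le> inverse (u_P P) * (\<pi> x * exp_return P S x)"
    using mult_right_mono by fastforce
  then show ?thesis
    by (simp add: harm_stat_eq_exp_return[OF assms(2,3,5,6)] mult.assoc)
qed

end
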